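(* For the order-$M$ PARAFAC/CP model with rank $r$ and factor moments $(\mu_k,\sigma_k^2)$ described in the context, the squared mean and pure interaction terms satisfy $(\mathbb E[Y])^2=r^2\prod_{k=1}^M\mu_k^2$, $v_{\{p\}}=r\,\sigma_p^2\prod_{k\ne p}\mu_k^2$ for each $p$, and $v_{\{p,q\}}=r\,\sigma_p^2\sigma_q^2\prod_{k\ne p,q}\mu_k^2$ for all $p\ne q$.
   Context: PARAFAC/CP model of order $M$ and rank $r$: the rate tensor is $\eta_{i_1\dots i_M}=\sum_{s=1}^r\prod_{k=1}^M\theta^{(k)}_{i_k,s}$, where the entries of each factor matrix $\theta^{(k)}\in\mathbb R^{N_k\times r}$ are i.i.d. with mean $\mu_k$ and variance $\sigma_k^2$, independent across $k$. Conditional on $\boldsymbol\eta$, the $Y_{\mathbf i}$ are independent with $\mathbb E[Y_{\mathbf i}\mid\boldsymbol\eta]=\eta_{\mathbf i}$ and $\mathrm{Var}(Y_{\mathbf i}\mid\boldsymbol\eta)=\phi(\eta_{\mathbf i})$ for some positive function $\phi$; $\mathbb E[Y]$ is the common value of $\mathbb E[Y_{\mathbf i}]$. For $S\subseteq\{1,\dots,M\}$, $C_S:=\mathrm{Cov}(Y_{\mathbf i},Y_{\mathbf j})$ for multi-indices with $i_k=j_k$ for $k\in S$ and $i_k\ne j_k$ for $k\notin S$ (this depends only on $S$), with $C_\emptyset=0$; the pure interaction term is $v_S:=\sum_{S'\subseteq S}(-1)^{|S|-|S'|}C_{S'}$. *)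

theory Defs
  imports "HOL-Probability.Probability"
begin

definition cov :: "'a measure \<Rightarrow> ('a \<Rightarrow> real) \<Rightarrow> ('a \<Rightarrow> real) \<Rightarrow> real" where
  "cov P X Z = (\<integral>\<omega>. (X \<omega> - (\<integral>\<omega>'. X \<omega>' \<partial>P)) * (Z \<omega> - (\<integral>\<omega>'. Z \<omega>' \<partial>P)) \<partial>P)"

definition cp_index :: "nat \<Rightarrow> (nat \<Rightarrow> nat) \<Rightarrow> (nat \<Rightarrow> nat) set" where
  "cp_index M N = (\<Pi>\<^sub>E k\<in>{..<M}. {..<N k})"

definition cp_rate :: "nat \<Rightarrow> nat \<Rightarrow> (nat \<Rightarrow> nat \<Rightarrow> nat \<Rightarrow> 'a \<Rightarrow> real) \<Rightarrow> (nat \<Rightarrow> nat) \<Rightarrow> 'a \<Rightarrow> real" where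
  "cp_rate M r \<theta> i \<omega> = (\<Sum>s<r. \<Prod>k<M. \<theta> k (i k) s \<omega>)"

definition cp_eta_sigma :: "'a measure \<Rightarrow> nat \<Rightarrow> (nat \<Rightarrow> nat) \<Rightarrow> nat \<Rightarrow> (nat \<Rightarrow> nat \<Rightarrow> nat \<Rightarrow> 'a \<Rightarrow> real) \<Rightarrow> 'a measure" where
  "cp_eta_sigma P M N r \<theta> =
     sigma (space P) {cp_rate M r \<theta> i -` A \<inter> space P | i A. i \<in> cp_index M N \<and> A \<in> sets borel}"

definition cond_indep_family :: "'a measure \<Rightarrow> 'a measure \<Rightarrow> ('i \<Rightarrow> 'a \<Rightarrow> real) \<Rightarrow> 'i set \<Rightarrow> bool" where
  "cond_indep_family P F Y I \<longleftrightarrow>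
     (\<forall>J A. J \<subseteq> I \<longrightarrow> finite J \<longrightarrow> (\<forall>j\<in>J. A j \<in> sets (borel :: real measure)) \<longrightarrow>
        (AE \<omega> in P. real_cond_exp P F (\<lambda>\<omega>. \<Prod>j\<in>J. indicator (A j) (Y j \<omega>)) \<omega>
                    = (\<Prod>j\<in>J. real_cond_exp P F (\<lambda>\<omega>. indicator (A j) (Y j \<omega>)) \<omega>)))"

definition agree_pattern :: "nat \<Rightarrow> nat set \<Rightarrow> (nat \<Rightarrow> nat) \<Rightarrow> (nat \<Rightarrow> nat) \<Rightarrow> bool" where
  "agree_pattern M S i j \<longleftrightarrow> (\<forall>k<M. (i k = j k \<longleftrightarrow> k \<in> S))"

text \<open>C_S = Cov(Y_i, Y_j) for (some/any) multi-indices with agreement pattern S; C_{} = 0.\<close>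
definition cp_C :: "'a measure \<Rightarrow> nat \<Rightarrow> (nat \<Rightarrow> nat) \<Rightarrow> ((nat \<Rightarrow> nat) \<Rightarrow> 'a \<Rightarrow> real) \<Rightarrow> nat set \<Rightarrow> real" where
  "cp_C P M N Y S =
     (if S = {} then 0 else
       (let ij = (SOME ij. fst ij \<in> cp_index M N \<and> snd ij \<in> cp_index M N \<and> agree_pattern M S (fst ij) (snd ij))
        in cov P (Y (fst ij)) (Y (snd ij))))"

definition cp_v :: "'a measure \<Rightarrow> nat \<Rightarrow> (nat \<Rightarrow> nat) \<Rightarrow> ((nat \<Rightarrow> nat) \<Rightarrow> 'a \<Rightarrow> real) \<Rightarrow> nat set \<Rightarrow> real" where
  "cp_v P M N Y S = (\<Sum>S'\<in>Pow S. (-1) ^ (card S - card S') * cp_C P M N Y S')"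

end

(*
  Given the rate tensor eta, the Y_i are conditionally independent with conditional means eta_i,
  so E[Y_i Y_j] = E[eta_i eta_j] whenever i ~= j, and C_S = Cov(eta_i, eta_j) for S a proper subset
  of the modes. Expanding eta_i eta_j as a double sum over the rank index, independence of the factor
  entries gives E[prod_k theta^(k)_(i_k,s) theta^(k)_(j_k,s')] = prod_(k in S) (sigma_k^2 + mu_k^2)
  * prod_(k notin S) mu_k^2 if s = s' and prod_k mu_k^2 otherwise, hence
  C_S = r (prod_(k in S) (sigma_k^2 + mu_k^2) prod_(k notin S) mu_k^2 - prod_k mu_k^2).
  The alternating sum defining v_S is the expansion of prod_(k in S) ((sigma_k^2 + mu_k^2) - mu_k^2),
  so v_S = r prod_(k in S) sigma_k^2 prod_(k notin S) mu_k^2 for every nonempty proper S.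
  Only first and second moments enter; the conditional variance phi would only matter for C_S with
  S the full set of modes (i = j), which none of the claims involves.
*)

theory Submission
  imports Defs
begin

lemma integrable_mult_of_square_integrable:
  fixes f g :: "'a \<Rightarrow> real"
  assumes [measurable]: "f \<in> borel_measurable M" "g \<in> borel_measurable M"
    and "integrable M (\<lambda>x. (f x)\<^sup>2)" "integrable M (\<lambda>x. (g x)\<^sup>2)"
  shows "integrable M (\<lambda>x. f x * g x)"
proof (rule Bochner_Integration.integrable_bound[of _ "\<lambda>x. (f x)\<^sup>2 + (g x)\<^sup>2"])
  show "integrable M (\<lambda>x. (f x)\<^sup>2 + (g x)\<^sup>2)" using assms by auto
  have "\<bar>f x * g x\<bar> \<le> (f x)\<^sup>2 + (g x)\<^sup>2" for x
    using sum_squares_bound[of "\<bar>f x\<bar>" "\<bar>g x\<bar>"] abs_ge_zero[of "f x * g x"]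
    unfolding abs_mult power2_abs by linarith
  then show "AE x in M. norm (f x * g x) \<le> norm ((f x)\<^sup>2 + (g x)\<^sup>2)" by simp
qed simp

lemma integrable_mult_bounded:
  fixes f g :: "'a \<Rightarrow> real"
  assumes "integrable M f" and [measurable]: "g \<in> borel_measurable M"
    and "AE x in M. \<bar>g x\<bar> \<le> c"
  shows "integrable M (\<lambda>x. f x * g x)"
proof (rule Bochner_Integration.integrable_bound[of _ "\<lambda>x. c * f x"])
  show "integrable M (\<lambda>x. c * f x)" using assms(1) by simp
  show "(\<lambda>x. f x * g x) \<in> borel_measurable M" using borel_measurable_integrable[OF assms(1)] by simp
  show "AE x in M. norm (f x * g x) \<le> norm (c * f x)"
    using assms(3) by eventually_elim (auto simp: abs_mult mult.commute[of c] intro!: mult_left_mono)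
qed

lemma integrable_indicator_comp_mult:
  fixes f X :: "'a \<Rightarrow> real"
  assumes "integrable M f" "X \<in> borel_measurable M" "A \<in> sets borel"
  shows "integrable M (\<lambda>x. indicator A (X x) * f x)"
  using integrable_mult_bounded[OF assms(1), of "\<lambda>x. indicator A (X x)" 1] assms(2,3)
  by (simp add: mult.commute)

lemma emeasure_distr_density_real:
  fixes u X :: "'a \<Rightarrow> real"
  assumes [measurable]: "X \<in> borel_measurable M" "u \<in> borel_measurable M" "A \<in> sets borel"
    and "AE x in M. 0 \<le> u x" "integrable M u"
  shows "emeasure (distr (density M u) borel X) A = ennreal (\<integral>x. indicator A (X x) * u x \<partial>M)"
proof -
  have "emeasure (distr (density M u) borel X) A = (\<integral>\<^sup>+ x. ennreal (u x) * indicator (X -` A \<inter> space M) x \<partial>M)"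
    by (simp add: emeasure_distr emeasure_density)
  also have "\<dots> = (\<integral>\<^sup>+ x. ennreal (indicator A (X x) * u x) \<partial>M)"
    by (rule nn_integral_cong) (auto simp: indicator_def)
  also have "\<dots> = ennreal (\<integral>x. indicator A (X x) * u x \<partial>M)"
    using assms(4,5) by (intro nn_integral_eq_integral integrable_indicator_comp_mult) auto
  finally show ?thesis .
qed

(* The positive and negative parts of w, used as densities, give X the same distribution. *)
lemma integral_mult_eq_0_if_indicators:
  fixes X w :: "'a \<Rightarrow> real"
  assumes [measurable]: "X \<in> borel_measurable M" "w \<in> borel_measurable M"
    and w: "integrable M w" and Xw: "integrable M (\<lambda>x. X x * w x)"
    and orth: "\<And>A. A \<in> sets borel \<Longrightarrow> (\<integral>x. indicator A (X x) * w x \<partial>M) = 0"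
  shows "(\<integral>x. X x * w x \<partial>M) = 0"
proof -
  define u where "u x = max (w x) 0" for x
  define v where "v x = max (- w x) 0" for x
  have w_eq: "w x = u x - v x" for x by (simp add: u_def v_def max_def)
  have [measurable]: "u \<in> borel_measurable M" unfolding u_def by measurable
  have [measurable]: "v \<in> borel_measurable M" unfolding v_def by measurable
  have uv_int: "integrable M u" "integrable M v" using w unfolding u_def v_def by auto
  have uv_nonneg: "AE x in M. 0 \<le> u x" "AE x in M. 0 \<le> v x" by (simp_all add: u_def v_def)
  have Xuv_int: "integrable M (\<lambda>x. X x * u x)" "integrable M (\<lambda>x. X x * v x)"
    by (auto intro!: Bochner_Integration.integrable_bound[OF Xw] simp: u_def v_def abs_mult max_def mult_left_mono)
  have "(\<integral>x. indicator A (X x) * u x \<partial>M) = (\<integral>x. indicator A (X x) * v x \<partial>M)"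
    if [measurable]: "A \<in> sets borel" for A
    using orth[OF that] uv_int
    by (simp add: w_eq right_diff_distrib integrable_indicator_comp_mult)
  then have "distr (density M u) borel X = distr (density M v) borel X"
    by (intro measure_eqI) (simp_all add: emeasure_distr_density_real uv_int uv_nonneg)
  then have "(\<integral>y. y \<partial>distr (density M u) borel X) = (\<integral>y. y \<partial>distr (density M v) borel X)"
    by simp
  then have "(\<integral>x. X x * u x \<partial>M) = (\<integral>x. X x * v x \<partial>M)"
    by (simp add: integral_distr integral_density uv_nonneg mult.commute)
  then show ?thesis
    using Xuv_int by (simp add: w_eq right_diff_distrib)
qed

lemma (in prob_space) indep_blocks_integral:
  fixes g :: "'j \<Rightarrow> ('i \<Rightarrow> 'b::topological_space) \<Rightarrow> real"
  assumes indep: "indep_vars (\<lambda>_. borel) X I"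
    and "finite L" and K: "\<And>l. l \<in> L \<Longrightarrow> K l \<subseteq> I" and disj: "disjoint_family_on K L"
    and g: "\<And>l. l \<in> L \<Longrightarrow> g l \<in> borel_measurable (PiM (K l) (\<lambda>_. borel))"
    and int: "\<And>l. l \<in> L \<Longrightarrow> integrable M (\<lambda>x. g l (restrict (\<lambda>i. X i x) (K l)))"
  shows "integrable M (\<lambda>x. \<Prod>l\<in>L. g l (restrict (\<lambda>i. X i x) (K l)))"
    and "(\<integral>x. (\<Prod>l\<in>L. g l (restrict (\<lambda>i. X i x) (K l))) \<partial>M)
          = (\<Prod>l\<in>L. \<integral>x. g l (restrict (\<lambda>i. X i x) (K l)) \<partial>M)"
proof -
  have "indep_vars (\<lambda>_. borel) (\<lambda>l x. g l (restrict (\<lambda>i. X i x) (K l))) L"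
    using indep_vars_compose2[OF indep_vars_restrict[OF indep K disj] g] by simp
  then show "integrable M (\<lambda>x. \<Prod>l\<in>L. g l (restrict (\<lambda>i. X i x) (K l)))"
    and "(\<integral>x. (\<Prod>l\<in>L. g l (restrict (\<lambda>i. X i x) (K l))) \<partial>M)
          = (\<Prod>l\<in>L. \<integral>x. g l (restrict (\<lambda>i. X i x) (K l)) \<partial>M)"
    using indep_vars_integrable indep_vars_lebesgue_integral \<open>finite L\<close> int by auto
qed

lemma cond_indep_family_pairD:
  assumes "cond_indep_family M F Y I" "i \<in> I" "j \<in> I" "i \<noteq> j"
    and "A \<in> sets borel" "B \<in> sets borel"
  shows "AE x in M. real_cond_exp M F (\<lambda>x. indicator A (Y i x) * indicator B (Y j x)) x
           = real_cond_exp M F (\<lambda>x. indicator A (Y i x)) x * real_cond_exp M F (\<lambda>x. indicator B (Y j x)) x"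
  using assms unfolding cond_indep_family_def
  by (elim allE[of _ "{i, j}"] allE[of _ "\<lambda>l. if l = i then A else B"]) auto

context finite_measure_subalgebra
begin

lemma integral_indicator_mult_cond_indep:
  fixes Y :: "'i \<Rightarrow> 'a \<Rightarrow> real"
  assumes indep: "cond_indep_family M F Y I" "i \<in> I" "j \<in> I" "i \<noteq> j"
    and [measurable]: "Y i \<in> borel_measurable M" "Y j \<in> borel_measurable M" "B \<in> sets borel"
    and Yi: "integrable M (Y i)"
  shows "(\<integral>x. indicator B (Y j x) * Y i x \<partial>M) = (\<integral>x. indicator B (Y j x) * real_cond_exp M F (Y i) x \<partial>M)"
proof -
  have ind_int: "integrable M (\<lambda>x. indicator A (Y l x) :: real)"
    if "A \<in> sets borel" "Y l \<in> borel_measurable M" for A l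
    using that by (intro integrable_const_bound[where B=1]) auto
  define c where "c = real_cond_exp M F (\<lambda>x. indicator B (Y j x))"
  have [measurable]: "c \<in> borel_measurable F" "c \<in> borel_measurable M"
    unfolding c_def by (auto intro: measurable_from_subalg[OF subalg])
  have c_bounds: "AE x in M. 0 \<le> c x \<and> c x \<le> 1"
    using real_cond_exp_ge_c[OF ind_int[of B j], of 0] real_cond_exp_le_c[OF ind_int[of B j], of 1]
    unfolding c_def by (auto simp: indicator_def)
  have c_int: "integrable M c"
    unfolding c_def by (intro real_cond_exp_int ind_int) auto
  have indicator_orth: "(\<integral>x. indicator A (Y i x) * (indicator B (Y j x) - c x) \<partial>M) = 0"
    if [measurable]: "A \<in> sets borel" for A
  proof -
    have "(\<integral>x. indicator A (Y i x) * indicator B (Y j x) \<partial>M)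
        = (\<integral>x. real_cond_exp M F (\<lambda>x. indicator A (Y i x) * indicator B (Y j x)) x \<partial>M)"
      by (intro real_cond_exp_int(2)[symmetric] integrable_indicator_comp_mult ind_int) auto
    also have "\<dots> = (\<integral>x. c x * real_cond_exp M F (\<lambda>x. indicator A (Y i x)) x \<partial>M)"
      using cond_indep_family_pairD[OF indep that \<open>B \<in> sets borel\<close>]
      by (intro integral_cong_AE) (auto simp: c_def mult.commute)
    also have "\<dots> = (\<integral>x. c x * indicator A (Y i x) \<partial>M)"
      using integrable_indicator_comp_mult[OF c_int, of "Y i" A]
      by (intro real_cond_exp_intg(2)) (auto simp: mult.commute)
    finally show ?thesis
      using integrable_indicator_comp_mult[OF c_int, of "Y i" A]
        integrable_indicator_comp_mult[OF ind_int[of B j], of "Y i" A]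
      by (simp add: right_diff_distrib mult.commute)
  qed
  have YB_int: "integrable M (\<lambda>x. Y i x * indicator B (Y j x))"
    using integrable_indicator_comp_mult[OF Yi, of "Y j" B] by (simp add: mult.commute)
  have Yc_int: "integrable M (\<lambda>x. Y i x * c x)"
    by (rule integrable_mult_bounded[OF Yi, where c=1]) (use c_bounds in auto)
  have "(\<integral>x. Y i x * (indicator B (Y j x) - c x) \<partial>M) = 0"
  proof (rule integral_mult_eq_0_if_indicators)
    show "integrable M (\<lambda>x. indicator B (Y j x) - c x)"
      using ind_int[of B j] c_int by simp
    show "integrable M (\<lambda>x. Y i x * (indicator B (Y j x) - c x))"
      using YB_int Yc_int by (simp add: right_diff_distrib)
  qed (simp_all add: indicator_orth)
  then have "(\<integral>x. Y i x * indicator B (Y j x) \<partial>M) = (\<integral>x. c x * Y i x \<partial>M)"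
    using YB_int Yc_int by (simp add: right_diff_distrib mult.commute)
  also have "\<dots> = (\<integral>x. c x * real_cond_exp M F (Y i) x \<partial>M)"
    using Yc_int by (intro real_cond_exp_intg(2)[symmetric]) (simp_all add: mult.commute)
  also have "\<dots> = (\<integral>x. real_cond_exp M F (Y i) x * indicator B (Y j x) \<partial>M)"
    using integrable_indicator_comp_mult[OF real_cond_exp_int(1)[OF Yi], of "Y j" B]
    unfolding c_def by (subst mult.commute, intro real_cond_exp_intg(2)) (simp_all add: mult.commute)
  finally show ?thesis by (simp add: mult.commute)
qed

lemma integral_mult_cond_indep:
  fixes Y :: "'i \<Rightarrow> 'a \<Rightarrow> real"
  assumes indep: "cond_indep_family M F Y I" "i \<in> I" "j \<in> I" "i \<noteq> j"
    and [measurable]: "Y i \<in> borel_measurable M" "Y j \<in> borel_measurable M"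
    and Yi: "integrable M (Y i)"
    and YY: "integrable M (\<lambda>x. Y i x * Y j x)"
    and eY: "integrable M (\<lambda>x. real_cond_exp M F (Y i) x * Y j x)"
  shows "(\<integral>x. Y i x * Y j x \<partial>M) = (\<integral>x. real_cond_exp M F (Y i) x * real_cond_exp M F (Y j) x \<partial>M)"
proof -
  let ?e = "real_cond_exp M F (Y i)"
  have "(\<integral>x. Y j x * (Y i x - ?e x) \<partial>M) = 0"
  proof (rule integral_mult_eq_0_if_indicators)
    show "integrable M (\<lambda>x. Y i x - ?e x)"
      using Yi by (simp add: real_cond_exp_int(1))
    show "integrable M (\<lambda>x. Y j x * (Y i x - ?e x))"
      using YY eY by (simp add: right_diff_distrib mult.commute)
    show "(\<integral>x. indicator A (Y j x) * (Y i x - ?e x) \<partial>M) = 0" if [measurable]: "A \<in> sets borel" for A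
      using integral_indicator_mult_cond_indep[OF indep _ _ that Yi]
        integrable_indicator_comp_mult[OF Yi, of "Y j" A]
        integrable_indicator_comp_mult[OF real_cond_exp_int(1)[OF Yi], of "Y j" A]
      by (simp add: right_diff_distrib)
  qed simp_all
  then have "(\<integral>x. Y i x * Y j x \<partial>M) = (\<integral>x. ?e x * Y j x \<partial>M)"
    using YY eY by (simp add: right_diff_distrib mult.commute)
  also have "\<dots> = (\<integral>x. ?e x * real_cond_exp M F (Y j) x \<partial>M)"
    using eY by (intro real_cond_exp_intg(2)[symmetric]) simp_all
  finally show ?thesis .
qed

end

lemma (in prob_space) cov_eq:
  assumes "integrable M X" "integrable M Z" "integrable M (\<lambda>x. X x * Z x)"
  shows "cov M X Z = expectation (\<lambda>x. X x * Z x) - expectation X * expectation Z"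
proof -
  have "cov M X Z = expectation (\<lambda>x. X x * Z x - expectation Z * X x - expectation X * Z x
                                      + expectation X * expectation Z)"
    unfolding cov_def by (intro Bochner_Integration.integral_cong) (simp_all add: algebra_simps)
  also have "\<dots> = expectation (\<lambda>x. X x * Z x) - expectation X * expectation Z"
    using assms by (simp add: prob_space)
  finally show ?thesis .
qed

lemma sum_Pow_alternating_prod_if:
  fixes a b :: "'i \<Rightarrow> 'a::comm_ring_1"
  assumes "finite I" "S \<subseteq> I"
  shows "(\<Sum>T\<in>Pow S. (-1) ^ (card S - card T) * (\<Prod>k\<in>I. if k \<in> T then a k else b k))
       = (\<Prod>k\<in>S. a k - b k) * (\<Prod>k\<in>I - S. b k)"
proof -
  have S: "finite S" using assms finite_subset by blast
  have split: "(\<Prod>k\<in>I. if k \<in> T then a k else b k) = (\<Prod>k\<in>T. a k) * (\<Prod>k\<in>S - T. b k) * (\<Prod>k\<in>I - S. b k)"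
    if "T \<subseteq> S" for T
  proof -
    let ?f = "\<lambda>k. if k \<in> T then a k else b k"
    have "prod ?f I = prod ?f (I - S) * (prod ?f (S - T) * prod ?f T)"
      using prod.subset_diff[OF assms(2,1), of ?f] prod.subset_diff[OF that S, of ?f] by (simp only:)
    also have "\<dots> = (\<Prod>k\<in>T. a k) * (\<Prod>k\<in>S - T. b k) * (\<Prod>k\<in>I - S. b k)"
    proof -
      have "prod ?f (I - S) = prod b (I - S)" using that by (intro prod.cong) auto
      then show ?thesis by (simp add: mult_ac)
    qed
    finally show ?thesis .
  qed
  show ?thesis
    by (simp add: prod_diff_conv_sum'[OF S] sum_distrib_left sum_distrib_right split mult_ac)
qed

lemma cp_index_lt: "i \<in> cp_index M N \<Longrightarrow> k < M \<Longrightarrow> i k < N k"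
  by (auto simp: cp_index_def PiE_iff)

lemma agree_pattern_exists:
  assumes "\<And>k. k < M \<Longrightarrow> 2 \<le> N k"
  shows "\<exists>ij. fst ij \<in> cp_index M N \<and> snd ij \<in> cp_index M N \<and> agree_pattern M S (fst ij) (snd ij)"
proof -
  let ?i = "\<lambda>k\<in>{..<M}. 0::nat" and ?j = "\<lambda>k\<in>{..<M}. if k \<in> S then 0 else 1::nat"
  have "?i \<in> cp_index M N" "?j \<in> cp_index M N" "agree_pattern M S ?i ?j"
    using assms by (fastforce simp: cp_index_def agree_pattern_def)+
  then show ?thesis by (intro exI[of _ "(?i, ?j)"]) simp
qed

locale cp_factors = prob_space Pr for Pr :: "'a measure" +
  fixes M r :: nat and N :: "nat \<Rightarrow> nat"
    and \<theta> :: "nat \<Rightarrow> nat \<Rightarrow> nat \<Rightarrow> 'a \<Rightarrow> real"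
    and \<mu> \<sigma> :: "nat \<Rightarrow> real"
  assumes theta_rv: "\<And>k i s. k < M \<Longrightarrow> i < N k \<Longrightarrow> s < r \<Longrightarrow> \<theta> k i s \<in> borel_measurable Pr"
    and theta_indep: "indep_vars (\<lambda>_. borel) (\<lambda>(k, i, s). \<theta> k i s)
                        {(k, i, s). k < M \<and> i < N k \<and> s < r}"
    and theta_L2: "\<And>k i s. k < M \<Longrightarrow> i < N k \<Longrightarrow> s < r \<Longrightarrow> integrable Pr (\<lambda>\<omega>. (\<theta> k i s \<omega>)\<^sup>2)"
    and theta_mean: "\<And>k i s. k < M \<Longrightarrow> i < N k \<Longrightarrow> s < r \<Longrightarrow> expectation (\<theta> k i s) = \<mu> k"
    and theta_var: "\<And>k i s. k < M \<Longrightarrow> i < N k \<Longrightarrow> s < r \<Longrightarrow> variance (\<theta> k i s) = (\<sigma> k)\<^sup>2"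
begin

definition mode :: "nat \<Rightarrow> (nat \<times> nat \<times> nat) set" where
  "mode k = {k} \<times> {..<N k} \<times> {..<r}"

definition factor :: "nat \<Rightarrow> 'a \<Rightarrow> nat \<times> nat \<times> nat \<Rightarrow> real" where
  "factor k \<omega> = restrict (\<lambda>t. (\<lambda>(k, i, s). \<theta> k i s) t \<omega>) (mode k)"

definition agree_moment :: "nat set \<Rightarrow> real" where
  "agree_moment S = (\<Prod>k<M. if k \<in> S then (\<sigma> k)\<^sup>2 + (\<mu> k)\<^sup>2 else (\<mu> k)\<^sup>2)"

lemma agree_moment_empty: "agree_moment {} = (\<Prod>k<M. (\<mu> k)\<^sup>2)"
  by (simp add: agree_moment_def)

lemma agree_moment_cong: "(\<And>k. k < M \<Longrightarrow> k \<in> S \<longleftrightarrow> k \<in> T) \<Longrightarrow> agree_moment S = agree_moment T"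
  unfolding agree_moment_def by (intro prod.cong) auto

lemma theta_integrable: "k < M \<Longrightarrow> i < N k \<Longrightarrow> s < r \<Longrightarrow> integrable Pr (\<theta> k i s)"
  using square_integrable_imp_integrable[OF theta_rv theta_L2] by auto

lemma theta_pair_moment:
  assumes "k < M" "i < N k" "s < r" "i' < N k" "s' < r"
  shows "integrable Pr (\<lambda>\<omega>. \<theta> k i s \<omega> * \<theta> k i' s' \<omega>)"
    and "expectation (\<lambda>\<omega>. \<theta> k i s \<omega> * \<theta> k i' s' \<omega>)
          = (if i = i' \<and> s = s' then (\<sigma> k)\<^sup>2 + (\<mu> k)\<^sup>2 else (\<mu> k)\<^sup>2)"
proof -
  have "integrable Pr (\<lambda>\<omega>. \<theta> k i s \<omega> * \<theta> k i' s' \<omega>) \<and>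
        expectation (\<lambda>\<omega>. \<theta> k i s \<omega> * \<theta> k i' s' \<omega>)
          = (if i = i' \<and> s = s' then (\<sigma> k)\<^sup>2 + (\<mu> k)\<^sup>2 else (\<mu> k)\<^sup>2)"
  proof (cases "i = i' \<and> s = s'")
    case True
    have "expectation (\<lambda>\<omega>. (\<theta> k i s \<omega>)\<^sup>2) = (\<sigma> k)\<^sup>2 + (\<mu> k)\<^sup>2"
      using variance_eq[OF theta_integrable theta_L2, of k i s] theta_var theta_mean assms by simp
    then show ?thesis
      using True theta_L2[of k i s] assms by (simp add: power2_eq_square)
  next
    case False
    let ?X = "\<lambda>(k, i, s). \<theta> k i s"
    have indep: "indep_vars (\<lambda>_. borel) ?X {(k, i, s), (k, i', s')}"
      by (rule indep_vars_subset[OF theta_indep]) (use assms in auto)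
    show ?thesis
      using indep_vars_integrable[OF _ indep] indep_vars_lebesgue_integral[OF _ indep]
        False assms theta_integrable theta_mean
      by (auto simp: power2_eq_square)
  qed
  then show "integrable Pr (\<lambda>\<omega>. \<theta> k i s \<omega> * \<theta> k i' s' \<omega>)"
    and "expectation (\<lambda>\<omega>. \<theta> k i s \<omega> * \<theta> k i' s' \<omega>)
          = (if i = i' \<and> s = s' then (\<sigma> k)\<^sup>2 + (\<mu> k)\<^sup>2 else (\<mu> k)\<^sup>2)"
    by auto
qed

lemma indep_modes_integral:
  fixes g :: "nat \<Rightarrow> (nat \<times> nat \<times> nat \<Rightarrow> real) \<Rightarrow> real"
  assumes "\<And>k. k < M \<Longrightarrow> g k \<in> borel_measurable (PiM (mode k) (\<lambda>_. borel))"
    and "\<And>k. k < M \<Longrightarrow> integrable Pr (\<lambda>\<omega>. g k (factor k \<omega>))"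
  shows "integrable Pr (\<lambda>\<omega>. \<Prod>k<M. g k (factor k \<omega>))"
    and "expectation (\<lambda>\<omega>. \<Prod>k<M. g k (factor k \<omega>)) = (\<Prod>k<M. expectation (\<lambda>\<omega>. g k (factor k \<omega>)))"
proof -
  have "mode k \<subseteq> {(k, i, s). k < M \<and> i < N k \<and> s < r}" if "k \<in> {..<M}" for k
    using that by (auto simp: mode_def)
  moreover have "disjoint_family_on mode {..<M}"
    by (auto simp: disjoint_family_on_def mode_def)
  moreover note assms[unfolded factor_def]
  ultimately show "integrable Pr (\<lambda>\<omega>. \<Prod>k<M. g k (factor k \<omega>))"
    and "expectation (\<lambda>\<omega>. \<Prod>k<M. g k (factor k \<omega>)) = (\<Prod>k<M. expectation (\<lambda>\<omega>. g k (factor k \<omega>)))"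
    unfolding factor_def
    by (rule indep_blocks_integral[OF theta_indep finite_lessThan]; simp)+
qed

lemma factor_prod_moment:
  assumes i: "i \<in> cp_index M N" and "s < r"
  shows "integrable Pr (\<lambda>\<omega>. \<Prod>k<M. \<theta> k (i k) s \<omega>)"
    and "expectation (\<lambda>\<omega>. \<Prod>k<M. \<theta> k (i k) s \<omega>) = (\<Prod>k<M. \<mu> k)"
proof -
  let ?g = "\<lambda>k f. f (k, i k, s) :: real"
  have mem: "(k, i k, s) \<in> mode k" if "k < M" for k
    using that assms cp_index_lt[OF i] by (simp add: mode_def)
  have eval: "?g k (factor k \<omega>) = \<theta> k (i k) s \<omega>" if "k < M" for k \<omega>
    using mem[OF that] by (simp add: factor_def)
  have "?g k \<in> borel_measurable (PiM (mode k) (\<lambda>_. borel))" if "k < M" for k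
    using mem[OF that] by simp
  moreover have "integrable Pr (\<lambda>\<omega>. ?g k (factor k \<omega>))" if "k < M" for k
    using that assms theta_integrable cp_index_lt[OF i] by (simp add: eval)
  ultimately show "integrable Pr (\<lambda>\<omega>. \<Prod>k<M. \<theta> k (i k) s \<omega>)"
    and "expectation (\<lambda>\<omega>. \<Prod>k<M. \<theta> k (i k) s \<omega>) = (\<Prod>k<M. \<mu> k)"
    using indep_modes_integral[of ?g] assms theta_mean cp_index_lt[OF i] by (simp_all add: eval)
qed

lemma factor_prod_pair_moment:
  assumes i: "i \<in> cp_index M N" and j: "j \<in> cp_index M N" and "s < r" "s' < r"
  shows "integrable Pr (\<lambda>\<omega>. \<Prod>k<M. \<theta> k (i k) s \<omega> * \<theta> k (j k) s' \<omega>)"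
    and "expectation (\<lambda>\<omega>. \<Prod>k<M. \<theta> k (i k) s \<omega> * \<theta> k (j k) s' \<omega>)
          = (if s = s' then agree_moment {k. i k = j k} else agree_moment {})"
proof -
  let ?g = "\<lambda>k f. f (k, i k, s) * f (k, j k, s') :: real"
  have mem: "(k, i k, s) \<in> mode k" "(k, j k, s') \<in> mode k" if "k < M" for k
    using that assms cp_index_lt[OF i] cp_index_lt[OF j] by (simp_all add: mode_def)
  have eval: "?g k (factor k \<omega>) = \<theta> k (i k) s \<omega> * \<theta> k (j k) s' \<omega>" if "k < M" for k \<omega>
    using mem[OF that] by (simp add: factor_def)
  have "?g k \<in> borel_measurable (PiM (mode k) (\<lambda>_. borel))" if "k < M" for k
    using mem[OF that] by simp
  moreover have "integrable Pr (\<lambda>\<omega>. ?g k (factor k \<omega>))" if "k < M" for k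
    using that assms theta_pair_moment(1) cp_index_lt[OF i] cp_index_lt[OF j] by (simp add: eval)
  ultimately show "integrable Pr (\<lambda>\<omega>. \<Prod>k<M. \<theta> k (i k) s \<omega> * \<theta> k (j k) s' \<omega>)"
    and "expectation (\<lambda>\<omega>. \<Prod>k<M. \<theta> k (i k) s \<omega> * \<theta> k (j k) s' \<omega>)
          = (if s = s' then agree_moment {k. i k = j k} else agree_moment {})"
    using indep_modes_integral[of ?g] assms theta_pair_moment(2) cp_index_lt[OF i] cp_index_lt[OF j]
    by (simp_all add: eval agree_moment_def)
qed

lemma cp_rate_measurable: "i \<in> cp_index M N \<Longrightarrow> cp_rate M r \<theta> i \<in> borel_measurable Pr"
  unfolding cp_rate_def[abs_def]
  by (intro borel_measurable_sum borel_measurable_prod theta_rv) (auto simp: cp_index_lt)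

lemma cp_rate_moment:
  assumes "i \<in> cp_index M N"
  shows "integrable Pr (cp_rate M r \<theta> i)"
    and "expectation (cp_rate M r \<theta> i) = real r * (\<Prod>k<M. \<mu> k)"
proof -
  show "integrable Pr (cp_rate M r \<theta> i)"
    unfolding cp_rate_def[abs_def]
    by (intro Bochner_Integration.integrable_sum factor_prod_moment(1)[OF assms]) simp
  then show "expectation (cp_rate M r \<theta> i) = real r * (\<Prod>k<M. \<mu> k)"
    unfolding cp_rate_def[abs_def] using factor_prod_moment[OF assms]
    by (subst Bochner_Integration.integral_sum) simp_all
qed

lemma cp_rate_mult_moment:
  assumes "i \<in> cp_index M N" "j \<in> cp_index M N"
  shows "integrable Pr (\<lambda>\<omega>. cp_rate M r \<theta> i \<omega> * cp_rate M r \<theta> j \<omega>)"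
    and "expectation (\<lambda>\<omega>. cp_rate M r \<theta> i \<omega> * cp_rate M r \<theta> j \<omega>)
         = real r * (agree_moment {k. i k = j k} - agree_moment {}) + (real r)\<^sup>2 * agree_moment {}"
proof -
  have expand: "cp_rate M r \<theta> i \<omega> * cp_rate M r \<theta> j \<omega>
      = (\<Sum>s<r. \<Sum>s'<r. \<Prod>k<M. \<theta> k (i k) s \<omega> * \<theta> k (j k) s' \<omega>)" for \<omega>
    by (simp add: cp_rate_def sum_product prod.distrib)
  show "integrable Pr (\<lambda>\<omega>. cp_rate M r \<theta> i \<omega> * cp_rate M r \<theta> j \<omega>)"
    unfolding expand
    by (intro Bochner_Integration.integrable_sum factor_prod_pair_moment(1)[OF assms]) simp_all
  let ?P = "\<lambda>s s' \<omega>. \<Prod>k<M. \<theta> k (i k) s \<omega> * \<theta> k (j k) s' \<omega>"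
  have P_int: "integrable Pr (?P s s')" if "s \<in> {..<r}" "s' \<in> {..<r}" for s s'
    using that by (simp add: factor_prod_pair_moment(1)[OF assms])
  have "expectation (\<lambda>\<omega>. cp_rate M r \<theta> i \<omega> * cp_rate M r \<theta> j \<omega>)
      = (\<Sum>s<r. expectation (\<lambda>\<omega>. \<Sum>s'<r. ?P s s' \<omega>))"
    unfolding expand
    by (rule Bochner_Integration.integral_sum) (auto intro!: Bochner_Integration.integrable_sum P_int)
  also have "\<dots> = (\<Sum>s<r. \<Sum>s'<r. expectation (?P s s'))"
    by (intro sum.cong refl Bochner_Integration.integral_sum P_int)
  also have "\<dots> = (\<Sum>s<r. \<Sum>s'<r. if s = s' then agree_moment {k. i k = j k} else agree_moment {})"
    by (intro sum.cong refl) (simp add: factor_prod_pair_moment(2)[OF assms])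
  also have "\<dots> = (\<Sum>s<r. \<Sum>s'<r.
      agree_moment {} + (if s = s' then agree_moment {k. i k = j k} - agree_moment {} else 0))"
    by (intro sum.cong refl) simp
  also have "\<dots> = (\<Sum>s<r. real r * agree_moment {} + (agree_moment {k. i k = j k} - agree_moment {}))"
    by (intro sum.cong refl) (simp add: sum.distrib)
  finally show "expectation (\<lambda>\<omega>. cp_rate M r \<theta> i \<omega> * cp_rate M r \<theta> j \<omega>)
      = real r * (agree_moment {k. i k = j k} - agree_moment {}) + (real r)\<^sup>2 * agree_moment {}"
    by (simp add: algebra_simps power2_eq_square)
qed

end

locale cp_model = cp_factors +
  fixes Y :: "(nat \<Rightarrow> nat) \<Rightarrow> 'a \<Rightarrow> real"
  assumes Y_rv: "\<And>i. i \<in> cp_index M N \<Longrightarrow> Y i \<in> borel_measurable Pr"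
    and Y_L2: "\<And>i. i \<in> cp_index M N \<Longrightarrow> integrable Pr (\<lambda>\<omega>. (Y i \<omega>)\<^sup>2)"
    and Y_cond_indep: "cond_indep_family Pr (cp_eta_sigma Pr M N r \<theta>) Y (cp_index M N)"
    and Y_cond_mean: "\<And>i. i \<in> cp_index M N \<Longrightarrow>
          AE \<omega> in Pr. real_cond_exp Pr (cp_eta_sigma Pr M N r \<theta>) (Y i) \<omega> = cp_rate M r \<theta> i \<omega>"
begin

abbreviation F :: "'a measure" where
  "F \<equiv> cp_eta_sigma Pr M N r \<theta>"

lemma space_eta_sigma: "space F = space Pr"
  unfolding cp_eta_sigma_def by (rule space_measure_of) auto

lemma sets_eta_sigma:
  "sets F = sigma_sets (space Pr) {cp_rate M r \<theta> i -` A \<inter> space Pr | i A. i \<in> cp_index M N \<and> A \<in> sets borel}"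
  unfolding cp_eta_sigma_def by (rule sets_measure_of) auto

lemma cp_rate_measurable_eta_sigma: "i \<in> cp_index M N \<Longrightarrow> cp_rate M r \<theta> i \<in> borel_measurable F"
  by (intro measurableI) (auto simp: space_eta_sigma sets_eta_sigma intro: sigma_sets.Basic)

lemma finite_measure_subalgebra_eta_sigma: "finite_measure_subalgebra Pr F"
proof -
  have "sets F \<subseteq> sets Pr"
    unfolding sets_eta_sigma using cp_rate_measurable measurable_sets
    by (intro sets.sigma_sets_subset) blast+
  then show ?thesis
    by (intro finite_measure_subalgebra.intro finite_measure_subalgebra_axioms.intro)
       (simp_all add: finite_measure_axioms subalgebra_def space_eta_sigma)
qed

interpretation eta: finite_measure_subalgebra Pr F
  by (rule finite_measure_subalgebra_eta_sigma)

lemma Y_integrable: "i \<in> cp_index M N \<Longrightarrow> integrable Pr (Y i)"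
  using square_integrable_imp_integrable[OF Y_rv Y_L2] .

lemma cp_rate_square_integrable: "i \<in> cp_index M N \<Longrightarrow> integrable Pr (\<lambda>\<omega>. (cp_rate M r \<theta> i \<omega>)\<^sup>2)"
  using cp_rate_mult_moment(1)[of i i] by (simp add: power2_eq_square)

lemma expectation_Y:
  assumes "i \<in> cp_index M N"
  shows "expectation (Y i) = real r * (\<Prod>k<M. \<mu> k)"
proof -
  have "expectation (Y i) = expectation (real_cond_exp Pr F (Y i))"
    using eta.real_cond_exp_int(2)[OF Y_integrable[OF assms]] by simp
  also have "\<dots> = expectation (cp_rate M r \<theta> i)"
    using Y_cond_mean[OF assms] by (intro integral_cong_AE) (simp_all add: cp_rate_measurable assms)
  finally show ?thesis using cp_rate_moment(2)[OF assms] by simp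
qed

lemma expectation_Y_mult:
  assumes i: "i \<in> cp_index M N" and j: "j \<in> cp_index M N" and "i \<noteq> j"
  shows "expectation (\<lambda>\<omega>. Y i \<omega> * Y j \<omega>) = expectation (\<lambda>\<omega>. cp_rate M r \<theta> i \<omega> * cp_rate M r \<theta> j \<omega>)"
proof -
  have [measurable]: "Y i \<in> borel_measurable Pr" "Y j \<in> borel_measurable Pr"
      "cp_rate M r \<theta> i \<in> borel_measurable Pr" "cp_rate M r \<theta> j \<in> borel_measurable Pr"
    using Y_rv cp_rate_measurable i j by simp_all
  have "integrable Pr (\<lambda>\<omega>. cp_rate M r \<theta> i \<omega> * Y j \<omega>)"
    using cp_rate_square_integrable[OF i] Y_L2[OF j] by (intro integrable_mult_of_square_integrable) simp_all
  then have "integrable Pr (\<lambda>\<omega>. real_cond_exp Pr F (Y i) \<omega> * Y j \<omega>)"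
    using Y_cond_mean[OF i] by (subst integrable_cong_AE) auto
  then have "expectation (\<lambda>\<omega>. Y i \<omega> * Y j \<omega>)
      = expectation (\<lambda>\<omega>. real_cond_exp Pr F (Y i) \<omega> * real_cond_exp Pr F (Y j) \<omega>)"
    using Y_L2[OF i] Y_L2[OF j] integrable_mult_of_square_integrable[of "Y i" Pr "Y j"]
    by (intro eta.integral_mult_cond_indep[OF Y_cond_indep i j \<open>i \<noteq> j\<close>] Y_integrable[OF i]) simp_all
  also have "\<dots> = expectation (\<lambda>\<omega>. cp_rate M r \<theta> i \<omega> * cp_rate M r \<theta> j \<omega>)"
    using Y_cond_mean[OF i] Y_cond_mean[OF j] by (intro integral_cong_AE) auto
  finally show ?thesis .
qed

lemma cov_Y:
  assumes i: "i \<in> cp_index M N" and j: "j \<in> cp_index M N" and "i \<noteq> j"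
  shows "cov Pr (Y i) (Y j) = real r * (agree_moment {k. i k = j k} - agree_moment {})"
proof -
  have "integrable Pr (\<lambda>\<omega>. Y i \<omega> * Y j \<omega>)"
    using Y_rv Y_L2 i j by (intro integrable_mult_of_square_integrable) simp_all
  then have "cov Pr (Y i) (Y j) = expectation (\<lambda>\<omega>. Y i \<omega> * Y j \<omega>) - expectation (Y i) * expectation (Y j)"
    using Y_integrable i j by (intro cov_eq) simp_all
  also have "\<dots> = real r * (agree_moment {k. i k = j k} - agree_moment {})"
    using assms by (simp add: expectation_Y_mult cp_rate_mult_moment(2) expectation_Y agree_moment_empty
        power2_eq_square prod.distrib algebra_simps)
  finally show ?thesis .
qed

lemma cp_C_eq:
  assumes N2: "\<And>k. k < M \<Longrightarrow> 2 \<le> N k" and "k0 < M" "k0 \<notin> S"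
  shows "cp_C Pr M N Y S = real r * (agree_moment S - agree_moment {})"
proof (cases "S = {}")
  case False
  define ij where "ij = (SOME ij. fst ij \<in> cp_index M N \<and> snd ij \<in> cp_index M N \<and> agree_pattern M S (fst ij) (snd ij))"
  obtain i j where "ij = (i, j)" by fastforce
  then have ij: "i \<in> cp_index M N" "j \<in> cp_index M N" "agree_pattern M S i j"
    using someI_ex[OF agree_pattern_exists[of M N S, OF N2]] unfolding ij_def by auto
  then have "i \<noteq> j" "agree_moment {k. i k = j k} = agree_moment S"
    using assms(2,3) by (auto simp: agree_pattern_def intro: agree_moment_cong)
  moreover have "cp_C Pr M N Y S = cov Pr (Y i) (Y j)"
    using False \<open>ij = (i, j)\<close> by (simp add: cp_C_def ij_def[symmetric] Let_def)
  ultimately show ?thesis using cov_Y[OF ij(1,2)] by simp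
qed (simp add: cp_C_def)

lemma cp_v_eq:
  assumes N2: "\<And>k. k < M \<Longrightarrow> 2 \<le> N k"
    and S: "S \<subseteq> {..<M}" "S \<noteq> {}" "S \<noteq> {..<M}"
  shows "cp_v Pr M N Y S = real r * (\<Prod>k\<in>S. (\<sigma> k)\<^sup>2) * (\<Prod>k\<in>{..<M} - S. (\<mu> k)\<^sup>2)"
proof -
  obtain k0 where "k0 < M" "k0 \<notin> S" using S(1,3) by blast
  let ?sgn = "\<lambda>T. (-1) ^ (card S - card T) :: real"
  have C: "cp_C Pr M N Y T = real r * (agree_moment T - agree_moment {})" if "T \<in> Pow S" for T
    using that \<open>k0 \<notin> S\<close> by (intro cp_C_eq[OF N2 \<open>k0 < M\<close>]) auto
  have "cp_v Pr M N Y S = (\<Sum>T\<in>Pow S. real r * (?sgn T * agree_moment T) - real r * (?sgn T * agree_moment {}))"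
    unfolding cp_v_def by (intro sum.cong refl) (simp add: C right_diff_distrib mult_ac)
  also have "\<dots> = real r * (\<Sum>T\<in>Pow S. ?sgn T * agree_moment T) - real r * (\<Sum>T\<in>Pow S. ?sgn T * agree_moment {})"
    by (simp add: sum_subtractf sum_distrib_left)
  also have "(\<Sum>T\<in>Pow S. ?sgn T * agree_moment T) = (\<Prod>k\<in>S. (\<sigma> k)\<^sup>2) * (\<Prod>k\<in>{..<M} - S. (\<mu> k)\<^sup>2)"
    using sum_Pow_alternating_prod_if[OF finite_lessThan S(1), of "\<lambda>k. (\<sigma> k)\<^sup>2 + (\<mu> k)\<^sup>2" "\<lambda>k. (\<mu> k)\<^sup>2"]
    by (simp add: agree_moment_def)
  also have "(\<Sum>T\<in>Pow S. ?sgn T * agree_moment {}) = 0"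
    using sum_Pow_alternating_prod_if[OF finite_lessThan S(1), of "\<lambda>k. (\<mu> k)\<^sup>2" "\<lambda>k. (\<mu> k)\<^sup>2"]
      S finite_subset[OF S(1)]
    by (simp add: agree_moment_def card_gt_0_iff)
  finally show ?thesis by simp
qed

end

theorem mainTheorem4:
  fixes Pr :: "'a measure"
    and M r :: nat and N :: "nat \<Rightarrow> nat"
    and \<theta> :: "nat \<Rightarrow> nat \<Rightarrow> nat \<Rightarrow> 'a \<Rightarrow> real"
    and \<mu> \<sigma> :: "nat \<Rightarrow> real"
    and \<phi> :: "real \<Rightarrow> real"
    and Y :: "(nat \<Rightarrow> nat) \<Rightarrow> 'a \<Rightarrow> real"
  assumes P: "prob_space Pr"
    and M_pos: "M \<ge> 1"
    and N_ge2: "\<And>k. k < M \<Longrightarrow> N k \<ge> 2"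
    and theta_rv: "\<And>k i s. k < M \<Longrightarrow> i < N k \<Longrightarrow> s < r \<Longrightarrow> \<theta> k i s \<in> borel_measurable Pr"
    and theta_indep: "prob_space.indep_vars Pr (\<lambda>_. borel) (\<lambda>(k, i, s). \<theta> k i s)
                        {(k, i, s). k < M \<and> i < N k \<and> s < r}"
    and theta_ident: "\<And>k i s i' s'. k < M \<Longrightarrow> i < N k \<Longrightarrow> s < r \<Longrightarrow> i' < N k \<Longrightarrow> s' < r \<Longrightarrow>
                        distr Pr borel (\<theta> k i s) = distr Pr borel (\<theta> k i' s')"
    and theta_L2: "\<And>k i s. k < M \<Longrightarrow> i < N k \<Longrightarrow> s < r \<Longrightarrow> integrable Pr (\<lambda>\<omega>. (\<theta> k i s \<omega>)\<^sup>2)"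
    and theta_mean: "\<And>k i s. k < M \<Longrightarrow> i < N k \<Longrightarrow> s < r \<Longrightarrow> prob_space.expectation Pr (\<theta> k i s) = \<mu> k"
    and theta_var: "\<And>k i s. k < M \<Longrightarrow> i < N k \<Longrightarrow> s < r \<Longrightarrow> prob_space.variance Pr (\<theta> k i s) = (\<sigma> k)\<^sup>2"
    and Y_rv: "\<And>i. i \<in> cp_index M N \<Longrightarrow> Y i \<in> borel_measurable Pr"
    and Y_L2: "\<And>i. i \<in> cp_index M N \<Longrightarrow> integrable Pr (\<lambda>\<omega>. (Y i \<omega>)\<^sup>2)"
    and phi_pos: "\<And>x. \<phi> x > 0"
    and Y_cond_indep: "cond_indep_family Pr (cp_eta_sigma Pr M N r \<theta>) Y (cp_index M N)"
    and Y_cond_mean: "\<And>i. i \<in> cp_index M N \<Longrightarrow>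
          AE \<omega> in Pr. real_cond_exp Pr (cp_eta_sigma Pr M N r \<theta>) (Y i) \<omega> = cp_rate M r \<theta> i \<omega>"
    and Y_cond_var: "\<And>i. i \<in> cp_index M N \<Longrightarrow>
          AE \<omega> in Pr. real_cond_exp Pr (cp_eta_sigma Pr M N r \<theta>)
                          (\<lambda>\<omega>. (Y i \<omega> - cp_rate M r \<theta> i \<omega>)\<^sup>2) \<omega> = \<phi> (cp_rate M r \<theta> i \<omega>)"
  shows "(\<forall>i\<in>cp_index M N. (prob_space.expectation Pr (Y i))\<^sup>2 = (real r)\<^sup>2 * (\<Prod>k<M. (\<mu> k)\<^sup>2))
       \<and> (M \<ge> 2 \<longrightarrow> (\<forall>p<M. cp_v Pr M N Y {p} = real r * (\<sigma> p)\<^sup>2 * (\<Prod>k\<in>{..<M} - {p}. (\<mu> k)\<^sup>2)))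
       \<and> (M \<ge> 3 \<longrightarrow> (\<forall>p<M. \<forall>q<M. p \<noteq> q \<longrightarrow>
            cp_v Pr M N Y {p, q} = real r * (\<sigma> p)\<^sup>2 * (\<sigma> q)\<^sup>2 * (\<Prod>k\<in>{..<M} - {p, q}. (\<mu> k)\<^sup>2)))"
proof -
  interpret cp_model Pr M r N \<theta> \<mu> \<sigma> Y
    by (intro cp_model.intro cp_factors.intro cp_factors_axioms.intro cp_model_axioms.intro) (fact assms)+
  have proper: "S \<noteq> {..<M}" if "card S < M" for S :: "nat set"
    using that by auto
  show ?thesis
  proof (intro conjI impI allI ballI)
    fix i assume "i \<in> cp_index M N"
    then show "(expectation (Y i))\<^sup>2 = (real r)\<^sup>2 * (\<Prod>k<M. (\<mu> k)\<^sup>2)"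
      by (simp add: expectation_Y power_mult_distrib prod_power_distrib)
  next
    fix p assume "M \<ge> 2" "p < M"
    then show "cp_v Pr M N Y {p} = real r * (\<sigma> p)\<^sup>2 * (\<Prod>k\<in>{..<M} - {p}. (\<mu> k)\<^sup>2)"
      using cp_v_eq[OF N_ge2, of "{p}"] proper[of "{p}"] by simp
  next
    fix p q assume "M \<ge> 3" "p < M" "q < M" "p \<noteq> q"
    then show "cp_v Pr M N Y {p, q} = real r * (\<sigma> p)\<^sup>2 * (\<sigma> q)\<^sup>2 * (\<Prod>k\<in>{..<M} - {p, q}. (\<mu> k)\<^sup>2)"
      using cp_v_eq[OF N_ge2, of "{p, q}"] proper[of "{p, q}"] by (simp add: mult.assoc)
  qed
qed

end
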